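(* Let $n\ge1$, $1\le k\le n$, and let $\tau\in\{0,1\}^n$ be a state of the TASEP of size $n$ with exactly $k$ particles (i.e. $k$ letters equal to $1$). Let $\lambda=\lambda(\tau)=(\lambda_1,\ldots,\lambda_k)$ and set $\lambda_{k+1}=0$. Then the stationary probability of $\tau$ is \[ \Pr(\tau)=\frac{\alpha^{k+\lambda_1}\beta^n}{Z_n}\det A^{\alpha,\beta}_{\lambda}, \] where \[ Z_n=(\alpha\beta)^n\sum_{p=1}^n\frac{p}{2n-p}\binom{2n-p}{n}\frac{\alpha^{-p-1}-\beta^{-p-1}}{\alpha^{-1}-\beta^{-1}} \] and $A^{\alpha,\beta}_{\lambda}=(A_{ij})_{1\le i,j\le k}$ with \[ A_{ij}=\left(\binom{\lambda_{j+1}}{j-i+1}+\frac{1}{\beta}\binom{\lambda_{j+1}}{j-i}\right)+\sum_{p=1}^{\lambda_j-\lambda_{j+1}}\left(\frac{1}{\alpha}\right)^p\left(\binom{\lambda_{j+1}+p-1}{j-i}+\frac{1}{\beta}\binom{\lambda_{j+1}+p-1}{j-i-1}\right). \]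
   Context: TASEP: fix $n\ge1$ and parameters $\alpha,\beta\in(0,1]$. States are words $\tau=\tau_1\cdots\tau_n\in\{0,1\}^n$ ($\tau_i=1$ iff site $i$ holds a particle). The discrete-time Markov chain has the following transitions, for arbitrary words $\tau',\tau''$: $0\tau'\to1\tau'$ with probability $\alpha/(n+1)$ (particle enters at site 1); $\tau'1\to\tau'0$ with probability $\beta/(n+1)$ (particle exits at site $n$); $\tau'10\tau''\to\tau'01\tau''$ with probability $1/(n+1)$ (particle hops right); with the remaining probability the state is unchanged. $\Pr(\tau)$ denotes the stationary probability of $\tau$. $\lambda(\tau)=(\lambda_1,\ldots,\lambda_k)$, where $\lambda_i$ is the total number of $0$'s occurring after the $i$-th $1$ in $\tau$. Binomial coefficients satisfy $\binom{m}{r}=0$ if $r<0$ or $r>m$, $\binom{m}{0}=1$; an empty sum is $0$. The quotient $\frac{\alpha^{-p-1}-\beta^{-p-1}}{\alpha^{-1}-\beta^{-1}}$ means the polynomial $\sum_{a=0}^{p}\alpha^{-a}\beta^{-(p-a)}$ (which also covers $\alpha=\beta$). *)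

theory Defs
  imports Complex_Main "Jordan_Normal_Form.Determinant"
begin

text \<open>States of the TASEP of size n: boolean lists of length n (True = particle).\<close>

definition tasep_states :: "nat \<Rightarrow> bool list set" where
  "tasep_states n = {t. length t = n}"

text \<open>The possible moves out of state t, as a list of (resulting state, probability).
  Entering at site 1, exiting at site n, and hops from site i+1 to i+2 (0-based i).\<close>

definition tasep_moves :: "real \<Rightarrow> real \<Rightarrow> bool list \<Rightarrow> (bool list \<times> real) list" where
  "tasep_moves a b t =
     (let n = length t in
       (if n \<ge> 1 \<and> \<not> t ! 0 then [(t[0 := True], a / real (n + 1))] else [])
     @ (if n \<ge> 1 \<and> t ! (n - 1) then [(t[n - 1 := False], b / real (n + 1))] else [])
     @ concat (map (\<lambda>i. if t ! i \<and> \<not> t ! (Suc i)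
                         then [(t[i := False, Suc i := True], 1 / real (n + 1))] else [])
                   [0..<n - 1]))"

definition tasep_P :: "real \<Rightarrow> real \<Rightarrow> bool list \<Rightarrow> bool list \<Rightarrow> real" where
  "tasep_P a b t s =
     sum_list (map snd (filter (\<lambda>m. fst m = s) (tasep_moves a b t)))
     + (if s = t then 1 - sum_list (map snd (tasep_moves a b t)) else 0)"

definition tasep_stationary :: "nat \<Rightarrow> real \<Rightarrow> real \<Rightarrow> (bool list \<Rightarrow> real) \<Rightarrow> bool" where
  "tasep_stationary n a b pr \<longleftrightarrow>
     (\<forall>t\<in>tasep_states n. pr t \<ge> 0) \<and>
     (\<Sum>t\<in>tasep_states n. pr t) = 1 \<and>
     (\<forall>s\<in>tasep_states n. (\<Sum>t\<in>tasep_states n. pr t * tasep_P a b t s) = pr s)"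

text \<open>lambda(t): for the i-th particle, the number of 0's after it (list, in order).\<close>

definition lam_list :: "bool list \<Rightarrow> nat list" where
  "lam_list t = map (\<lambda>j. length (filter Not (drop (Suc j) t)))
                    (filter (\<lambda>j. t ! j) [0..<length t])"

text \<open>1-based access lambda_i, with lambda_i = 0 for i beyond k (in particular lambda_(k+1) = 0).\<close>

definition lam :: "bool list \<Rightarrow> nat \<Rightarrow> nat" where
  "lam t i = (if 1 \<le> i \<and> i \<le> length (lam_list t) then lam_list t ! (i - 1) else 0)"

text \<open>Binomial coefficient with integer lower index: zero for r < 0 (and for r > m).\<close>

definition binz :: "nat \<Rightarrow> int \<Rightarrow> real" where
  "binz m r = (if r < 0 then 0 else real (m choose nat r))"

definition Zn :: "nat \<Rightarrow> real \<Rightarrow> real \<Rightarrow> real" where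
  "Zn n a b = (a * b) ^ n *
     (\<Sum>p=1..n. real p / real (2 * n - p) * real ((2 * n - p) choose n) *
        (\<Sum>c=0..p. (1 / a) ^ c * (1 / b) ^ (p - c)))"

definition A_entry :: "real \<Rightarrow> real \<Rightarrow> bool list \<Rightarrow> nat \<Rightarrow> nat \<Rightarrow> real" where
  "A_entry a b t i j =
     (binz (lam t (j + 1)) (int j - int i + 1) + (1 / b) * binz (lam t (j + 1)) (int j - int i))
     + (\<Sum>p=1..lam t j - lam t (j + 1).
          (1 / a) ^ p * (binz (lam t (j + 1) + p - 1) (int j - int i)
                         + (1 / b) * binz (lam t (j + 1) + p - 1) (int j - int i - 1)))"

definition A_mat :: "real \<Rightarrow> real \<Rightarrow> bool list \<Rightarrow> nat \<Rightarrow> real mat" where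
  "A_mat a b t k = mat k k (\<lambda>(i, j). A_entry a b t (i + 1) (j + 1))"

end

theory Submission
  imports Defs
begin

text \<open>Write a = 1/alpha, b = 1/beta and let the weight of a word be a^(number of leading zeros)
  times det A. Since A is lower Hessenberg with unit subdiagonal, Pascal-type column operations
  give the matrix-ansatz relations W(X10Y) = W(X1Y) + W(X0Y), W(0w) = a W(w), W(w1) = b W(w) and
  W([]) = 1. These relations make the weights a stationary measure: at every state the net
  inflow through each transition is a difference of signed weights of the word with one letter
  deleted, and these differences telescope. The chain is irreducible, so the stationary
  distribution is the normalised weight. Summing the relations over the first letter computes the
  normalisation in terms of the ballot numbers p/(2n-p) binom(2n-p, n), which gives Z_n.\<close>

section \<open>Lower Hessenberg determinants\<close>

text \<open>hess_det c t is the determinant of the t x t lower Hessenberg matrix with unit subdiagonal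
  whose column j (1-based) has the entry c j d at distance d above the subdiagonal, expanded
  along the last row.\<close>

fun hess_det :: "(nat \<Rightarrow> nat \<Rightarrow> real) \<Rightarrow> nat \<Rightarrow> real" where
  "hess_det c 0 = 1"
| "hess_det c (Suc t) = (\<Sum>s\<le>t. (-1)^(t-s) * c (Suc t) (t-s) * hess_det c s)"

lemma det_mat_1: "det (mat (Suc 0) (Suc 0) f) = f (0,0)"
  by (subst laplace_expansion_row[of _ 1 0]) (auto simp: cofactor_def mat_delete_def)

lemma det_hessenberg_last_column:
  fixes g :: "nat \<Rightarrow> int \<Rightarrow> real"
  assumes g1: "\<And>j. g j (-1) = 1" and g2: "\<And>j d. d < -1 \<Longrightarrow> g j d = 0"
  shows "det (mat (Suc t) (Suc t) (\<lambda>(i,j). if j = t then v i else g (j+1) (int j - int i)))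
       = (\<Sum>s\<le>t. (-1)^(t-s) * v s * hess_det (\<lambda>j d. g j (int d)) s)"
proof (induction t arbitrary: v)
  case 0
  show ?case by (simp add: det_mat_1)
next
  case (Suc t)
  let ?M = "mat (Suc (Suc t)) (Suc (Suc t)) (\<lambda>(i,j). if j = Suc t then v i else g (j+1) (int j - int i))"
  let ?c = "\<lambda>j d. g j (int d)"
  have M: "?M \<in> carrier_mat (Suc (Suc t)) (Suc (Suc t))" by simp
  have "det ?M = (\<Sum>j<Suc (Suc t). ?M $$ (Suc t, j) * cofactor ?M (Suc t) j)"
    by (rule laplace_expansion_row[OF M]) simp
  also have "\<dots> = (\<Sum>j\<in>{t, Suc t}. ?M $$ (Suc t, j) * cofactor ?M (Suc t) j)"
    by (rule sum.mono_neutral_right) (use g2 in auto)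
  also have "\<dots> = cofactor ?M (Suc t) t + v (Suc t) * cofactor ?M (Suc t) (Suc t)"
    using g1 by simp
  finally have dM: "det ?M = cofactor ?M (Suc t) t + v (Suc t) * cofactor ?M (Suc t) (Suc t)" .
  have d1: "mat_delete ?M (Suc t) t
      = mat (Suc t) (Suc t) (\<lambda>(i,j). if j = t then v i else g (j+1) (int j - int i))"
    by (rule eq_matI) (auto simp: mat_delete_def)
  have d2: "mat_delete ?M (Suc t) (Suc t)
      = mat (Suc t) (Suc t) (\<lambda>(i,j). if j = t then g (Suc t) (int t - int i) else g (j+1) (int j - int i))"
    by (rule eq_matI) (auto simp: mat_delete_def)
  have "det ?M = - (\<Sum>s\<le>t. (-1)^(t-s) * v s * hess_det ?c s)
      + v (Suc t) * (\<Sum>s\<le>t. (-1)^(t-s) * g (Suc t) (int t - int s) * hess_det ?c s)"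
    unfolding dM cofactor_def d1 d2 Suc.IH by simp
  also have "(\<Sum>s\<le>t. (-1)^(t-s) * g (Suc t) (int t - int s) * hess_det ?c s) = hess_det ?c (Suc t)"
    by (auto intro!: sum.cong simp: of_nat_diff)
  also have "- (\<Sum>s\<le>t. (-1)^(t-s) * v s * hess_det ?c s) = (\<Sum>s\<le>t. (-1)^(Suc t-s) * v s * hess_det ?c s)"
    by (auto simp: sum_negf[symmetric] Suc_diff_le intro!: sum.cong)
  finally show ?case by (simp add: algebra_simps)
qed

lemma det_hessenberg:
  fixes g :: "nat \<Rightarrow> int \<Rightarrow> real"
  assumes "\<And>j. g j (-1) = 1" and "\<And>j d. d < -1 \<Longrightarrow> g j d = 0"
  shows "det (mat t t (\<lambda>(i,j). g (j+1) (int j - int i))) = hess_det (\<lambda>j d. g j (int d)) t"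
proof (cases t)
  case 0 thus ?thesis by (simp add: det_dim_zero)
next
  case (Suc t')
  have "mat t t (\<lambda>(i,j). g (j+1) (int j - int i))
      = mat (Suc t') (Suc t') (\<lambda>(i,j). if j = t' then g (Suc t') (int t' - int i) else g (j+1) (int j - int i))"
    by (rule eq_matI) (auto simp: Suc)
  also have "det \<dots> = hess_det (\<lambda>j d. g j (int d)) t"
    using det_hessenberg_last_column[where g=g and v="\<lambda>i. g (Suc t') (int t' - int i)" and t=t', OF assms]
    unfolding Suc by (auto intro!: sum.cong simp: of_nat_diff)
  finally show ?thesis .
qed

lemma hess_det_cong: "(\<And>j. 1 \<le> j \<Longrightarrow> j \<le> t \<Longrightarrow> c j = c' j) \<Longrightarrow> hess_det c t = hess_det c' t"
proof (induction t rule: less_induct)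
  case (less t)
  show ?case
  proof (cases t)
    case (Suc t')
    have "hess_det c s = hess_det c' s" if "s \<le> t'" for s
      using less.IH[of s] less.prems that Suc by auto
    thus ?thesis using less.prems Suc by (auto intro!: sum.cong)
  qed simp
qed

text \<open>If each of the first N columns of c is the column of c' multiplied by 1 + x (as a
  polynomial in the distance d), then the determinants satisfy a Pascal-type recursion.\<close>

lemma hess_det_Suc_shift:
  assumes h0: "\<And>j. 1 \<le> j \<Longrightarrow> j \<le> N \<Longrightarrow> c j 0 = c' j 0 + 1"
    and hS: "\<And>j d. 1 \<le> j \<Longrightarrow> j \<le> N \<Longrightarrow> c j (Suc d) = c' j (Suc d) + c' j d"
  shows "s < N \<Longrightarrow> hess_det c (Suc s) = hess_det c' (Suc s) + hess_det c s"
proof (induction s rule: less_induct)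
  case (less s)
  define P where "P = hess_det c"
  have P': "hess_det c' u = P u - (if u = 0 then 0 else P (u - 1))" if "u \<le> s" for u
  proof (cases u)
    case (Suc u')
    thus ?thesis using less.IH[of u'] less.prems that by (simp add: P_def)
  qed (simp add: P_def)
  let ?c = "c (Suc s)" and ?c' = "c' (Suc s)"
  have A: "hess_det c' (Suc s) = (\<Sum>u\<le>s. (-1)^(s-u) * ?c' (s-u) * P u)
      - (\<Sum>u\<le>s. (-1)^(s-u) * ?c' (s-u) * (if u = 0 then 0 else P (u - 1)))"
    by (simp add: P' sum_subtractf[symmetric] algebra_simps)
  have B: "hess_det c (Suc s) = (\<Sum>u\<le>s. (-1)^(s-u) * ?c' (s-u) * P u) + P s
       + (\<Sum>u<s. (-1)^(s-u) * ?c' (s - Suc u) * P u)"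
  proof -
    have "hess_det c (Suc s) = (\<Sum>u\<le>s. (-1)^(s-u) * ?c (s-u) * P u)" by (simp add: P_def)
    also have "\<dots> = (\<Sum>u\<le>s. (-1)^(s-u) * ?c' (s-u) * P u
        + (if u = s then P s else (-1)^(s-u) * ?c' (s - Suc u) * P u))"
    proof (rule sum.cong[OF refl])
      fix u assume u: "u \<in> {..s}"
      show "(-1)^(s-u) * ?c (s-u) * P u
          = (-1)^(s-u) * ?c' (s-u) * P u + (if u = s then P s else (-1)^(s-u) * ?c' (s - Suc u) * P u)"
      proof (cases "u = s")
        case True thus ?thesis using h0[of "Suc s"] less.prems by (simp add: algebra_simps)
      next
        case False
        then have "s - u = Suc (s - Suc u)" using u by auto
        thus ?thesis using hS[of "Suc s" "s - Suc u"] less.prems False by (simp add: algebra_simps)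
      qed
    qed
    also have "\<dots> = (\<Sum>u\<le>s. (-1)^(s-u) * ?c' (s-u) * P u)
        + (\<Sum>u\<le>s. (if u = s then P s else (-1)^(s-u) * ?c' (s - Suc u) * P u))"
      by (rule sum.distrib)
    also have "(\<Sum>u\<le>s. (if u = s then P s else (-1)^(s-u) * ?c' (s - Suc u) * P u))
        = P s + (\<Sum>u<s. (-1)^(s-u) * ?c' (s - Suc u) * P u)"
      by (simp add: lessThan_Suc_atMost[symmetric])
    finally show ?thesis by simp
  qed
  have C: "(\<Sum>u\<le>s. (-1)^(s-u) * ?c' (s-u) * (if u = 0 then 0 else P (u - 1)))
        = - (\<Sum>u<s. (-1)^(s-u) * ?c' (s - Suc u) * P u)"
  proof (cases s)
    case (Suc s0)
    have "(\<Sum>u\<le>s. (-1)^(s-u) * ?c' (s-u) * (if u = 0 then 0 else P (u - 1)))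
       = (\<Sum>u\<le>s0. (-1)^(s-Suc u) * ?c' (s-Suc u) * P u)"
      unfolding Suc sum.atMost_Suc_shift by simp
    also have "\<dots> = - (\<Sum>u<s. (-1)^(s-u) * ?c' (s - Suc u) * P u)"
      unfolding Suc lessThan_Suc_atMost sum_negf[symmetric]
      by (rule sum.cong) (auto simp: Suc_diff_le)
    finally show ?thesis .
  qed simp
  show ?case using A B C by (simp add: P_def)
qed

lemma hess_det_extend:
  assumes r: "r \<ge> 1"
    and below: "\<And>s. s \<le> r \<Longrightarrow> hess_det c s = hess_det c' s + (if s = 0 then 0 else \<kappa> * hess_det c'' (s-1))"
    and c'eq: "\<And>j. r < j \<Longrightarrow> c' j = c j"
    and c''eq: "\<And>j. r < j \<Longrightarrow> c'' (j-1) = c j"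
  shows "hess_det c s = hess_det c' s + (if s = 0 then 0 else \<kappa> * hess_det c'' (s-1))"
proof (induction s rule: less_induct)
  case (less s)
  show ?case
  proof (cases "s \<le> r")
    case True thus ?thesis by (rule below)
  next
    case False
    then obtain t where s: "s = Suc t" and t: "r \<le> t" by (cases s) auto
    then obtain t1 where t1: "t = Suc t1" using r by (cases t) auto
    define \<gamma> where "\<gamma> u = (if u = 0 then 0 else \<kappa> * hess_det c'' (u-1))" for u
    have IH: "hess_det c u = hess_det c' u + \<gamma> u" if "u \<le> t" for u
      using less.IH[of u] that s \<gamma>_def by auto
    have "hess_det c s = (\<Sum>u\<le>t. (-1)^(t-u) * c (Suc t) (t-u) * (hess_det c' u + \<gamma> u))"
      using IH by (simp add: s)
    also have "\<dots> = (\<Sum>u\<le>t. (-1)^(t-u) * c (Suc t) (t-u) * hess_det c' u)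
        + (\<Sum>u\<le>t. (-1)^(t-u) * c (Suc t) (t-u) * \<gamma> u)"
      by (simp add: algebra_simps sum.distrib)
    also have "(\<Sum>u\<le>t. (-1)^(t-u) * c (Suc t) (t-u) * hess_det c' u) = hess_det c' s"
      using c'eq[of "Suc t"] t by (simp add: s)
    also have "(\<Sum>u\<le>t. (-1)^(t-u) * c (Suc t) (t-u) * \<gamma> u)
        = (\<Sum>u\<le>t1. (-1)^(t1-u) * c (Suc t) (t1-u) * (\<kappa> * hess_det c'' u))"
      unfolding t1 sum.atMost_Suc_shift by (simp add: \<gamma>_def)
    also have "\<dots> = \<kappa> * hess_det c'' t"
      using c''eq[of "Suc t"] t unfolding t1 by (simp add: sum_distrib_left algebra_simps)
    finally show ?thesis by (simp add: s)
  qed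
qed

lemma hess_det_split_column:
  assumes r1: "r1 = Suc r2"
    and low: "\<And>s. 1 \<le> s \<Longrightarrow> s \<le> r1 \<Longrightarrow> hess_det c s = hess_det c' s + hess_det c (s-1)"
    and c''eq: "\<And>j. 1 \<le> j \<Longrightarrow> j < r1 \<Longrightarrow> c'' j = c j"
    and d0: "c (Suc r1) 0 = c' (Suc r1) 0 + \<delta>"
    and dS: "\<And>d. c (Suc r1) (Suc d) - c' (Suc r1) (Suc d) - c' (Suc r1) d + c'' r1 d - \<delta> * c r1 d = 0"
  shows "hess_det c (Suc r1) = hess_det c' (Suc r1) + hess_det c'' r1"
proof -
  define P where "P = hess_det c"
  have P': "hess_det c' u = P u - (if u = 0 then 0 else P (u - 1))" if "u \<le> r1" for u
    using low[of u] that by (cases u) (auto simp: P_def)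
  have P'': "hess_det c'' u = P u" if "u \<le> r2" for u
    unfolding P_def by (rule hess_det_cong) (use c''eq that r1 in auto)
  let ?c = "c (Suc r1)" and ?c' = "c' (Suc r1)"
  have E1: "hess_det c (Suc r1) = \<delta> * P r1 + (\<Sum>u\<le>r1. (-1)^(r1-u) * ?c' (r1-u) * P u)
        + (\<Sum>u\<le>r2. (-1)^(r1-u) * (?c (r1-u) - ?c' (r1 - u)) * P u)"
  proof -
    have "hess_det c (Suc r1) = (\<Sum>u\<le>r1. (-1)^(r1-u) * ?c' (r1-u) * P u)
        + (\<Sum>u\<le>r1. (-1)^(r1-u) * (?c (r1-u) - ?c' (r1 - u)) * P u)"
      by (simp add: P_def sum.distrib[symmetric] algebra_simps)
    also have "(\<Sum>u\<le>r1. (-1)^(r1-u) * (?c (r1-u) - ?c' (r1 - u)) * P u)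
        = \<delta> * P r1 + (\<Sum>u\<le>r2. (-1)^(r1-u) * (?c (r1-u) - ?c' (r1 - u)) * P u)"
      unfolding r1 sum.atMost_Suc using d0 r1 by simp
    finally show ?thesis by simp
  qed
  have E2: "hess_det c' (Suc r1) = (\<Sum>u\<le>r1. (-1)^(r1-u) * ?c' (r1-u) * P u)
      - (\<Sum>u\<le>r2. (-1)^(r2-u) * ?c' (r2-u) * P u)"
  proof -
    have "hess_det c' (Suc r1) = (\<Sum>u\<le>r1. (-1)^(r1-u) * ?c' (r1-u) * P u)
        - (\<Sum>u\<le>r1. (-1)^(r1-u) * ?c' (r1-u) * (if u = 0 then 0 else P (u - 1)))"
      by (simp add: P' sum_subtractf[symmetric] algebra_simps)
    also have "(\<Sum>u\<le>r1. (-1)^(r1-u) * ?c' (r1-u) * (if u = 0 then 0 else P (u - 1)))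
        = (\<Sum>u\<le>r2. (-1)^(r2-u) * ?c' (r2-u) * P u)"
      unfolding r1 sum.atMost_Suc_shift by simp
    finally show ?thesis by simp
  qed
  have E3: "hess_det c'' r1 = (\<Sum>u\<le>r2. (-1)^(r2-u) * c'' r1 (r2-u) * P u)"
    using P'' by (simp add: r1)
  have E4: "P r1 = (\<Sum>u\<le>r2. (-1)^(r2-u) * c r1 (r2-u) * P u)"
    by (simp add: P_def r1)
  have "(\<Sum>u\<le>r2. (-1)^(r1-u) * (?c (r1-u) - ?c' (r1 - u)) * P u) + \<delta> * P r1
     + (\<Sum>u\<le>r2. (-1)^(r2-u) * ?c' (r2-u) * P u) - hess_det c'' r1
      = - (\<Sum>u\<le>r2. (-1)^(r2-u) * P u * (?c (Suc (r2-u)) - ?c' (Suc (r2-u)) - ?c' (r2-u)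
            + c'' r1 (r2-u) - \<delta> * c r1 (r2 - u)))"
    unfolding E3 E4 sum_negf[symmetric] sum_distrib_left sum_subtractf[symmetric] sum.distrib[symmetric]
    by (rule sum.cong) (auto simp: r1 Suc_diff_le algebra_simps)
  also have "\<dots> = 0" using dS by simp
  finally show ?thesis using E1 E2 by simp
qed

section \<open>The columns of the matrix A\<close>

definition tbinz :: "real \<Rightarrow> nat \<Rightarrow> int \<Rightarrow> real" where
  "tbinz b w d = binz w d + b * binz w (d - 1)"

text \<open>hess_entry a b u v (j - i) is the entry A_ij for lambda_j = u and lambda_(j+1) = v,
  written with a = 1/alpha and b = 1/beta.\<close>

definition hess_entry :: "real \<Rightarrow> real \<Rightarrow> nat \<Rightarrow> nat \<Rightarrow> int \<Rightarrow> real" where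
  "hess_entry a b u v d = binz v (d + 1) + b * binz v d + (\<Sum>p=1..u-v. a^p * tbinz b (v + p - 1) d)"

lemma binz_neg [simp]: "d < 0 \<Longrightarrow> binz w d = 0"
  by (simp add: binz_def)

lemma binz_0 [simp]: "binz w 0 = 1"
  by (simp add: binz_def)

lemma binz_0_left: "binz 0 d = (if d = 0 then 1 else 0)"
  by (auto simp: binz_def)

lemma binz_Suc: "binz (Suc w) d = binz w d + binz w (d - 1)"
proof (cases "d \<le> 0")
  case True thus ?thesis by (cases "d = 0") (auto simp: binz_def)
next
  case False
  then have "nat d = Suc (nat (d - 1))" by auto
  thus ?thesis using False by (simp add: binz_def)
qed

lemma tbinz_Suc: "tbinz b (Suc w) d = tbinz b w d + tbinz b w (d - 1)"
  by (simp add: tbinz_def binz_Suc algebra_simps)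

lemma tbinz_0 [simp]: "tbinz b w 0 = 1"
  by (simp add: tbinz_def)

lemma hess_entry_subdiag: "hess_entry a b u v (-1) = 1"
  by (simp add: hess_entry_def tbinz_def)

lemma hess_entry_below_subdiag: "d < -1 \<Longrightarrow> hess_entry a b u v d = 0"
  by (simp add: hess_entry_def tbinz_def)

lemma hess_entry_Suc: "hess_entry a b u (Suc v) d = hess_entry a b (u - 1) v d + hess_entry a b (u - 1) v (d - 1)"
proof -
  have "u - Suc v = u - 1 - v" by simp
  moreover have "tbinz b (Suc v + p - 1) d = tbinz b (v + p - 1) d + tbinz b (v + p - 1) (d - 1)" if "p \<ge> 1" for p
    using tbinz_Suc[of b "v + p - 1" d] that by (simp add: Suc_diff_le)
  ultimately show ?thesis
    unfolding hess_entry_def binz_Suc[of v] by (simp add: algebra_simps sum.distrib)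
qed

lemma hess_entry_diff:
  assumes "m \<ge> 1"
  shows "hess_entry a b (v + m) v d = hess_entry a b (v + m - 1) v d + a^m * tbinz b (v + m - 1) d"
proof -
  have "{1..m} = insert m {1..m-1}" using assms by auto
  then have "(\<Sum>p=1..m. a^p * tbinz b (v + p - 1) d)
      = a^m * tbinz b (v + m - 1) d + (\<Sum>p=1..m-1. a^p * tbinz b (v + p - 1) d)"
    using assms by (simp add: sum.insert)
  moreover have "v + m - v = m" "v + m - 1 - v = m - 1" by auto
  ultimately show ?thesis unfolding hess_entry_def by (simp add: algebra_simps)
qed

lemma hess_entry_shift:
  assumes "m \<ge> 1"
  shows "a^m * tbinz b (v + m - 1) (d + 1) - hess_entry a b (v + m - 1) v d + hess_entry a b (v + m + m') v d
         - a^m * hess_entry a b (v + m + m') (v + m) d = 0"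
proof -
  have split: "{1..m+m'} = {1..m-1} \<union> {m..m+m'}" using assms by auto
  have S1: "(\<Sum>p=1..m+m'. a^p * tbinz b (v + p - 1) d)
      = (\<Sum>p=1..m-1. a^p * tbinz b (v + p - 1) d) + (\<Sum>p=m..m+m'. a^p * tbinz b (v + p - 1) d)"
    unfolding split by (rule sum.union_disjoint) auto
  have S2: "(\<Sum>p=m..m+m'. a^p * tbinz b (v + p - 1) d)
      = a^m * tbinz b (v + m - 1) d + (\<Sum>p=Suc m..m+m'. a^p * tbinz b (v + p - 1) d)"
    by (subst sum.atLeast_Suc_atMost) auto
  have "(\<Sum>p=Suc m..m+m'. a^p * tbinz b (v + p - 1) d) = (\<Sum>p=1..m'. a^(p+m) * tbinz b (v + (p+m) - 1) d)"
    using sum.shift_bounds_cl_nat_ivl[of "\<lambda>p. a^p * tbinz b (v + p - 1) d" 1 m m'] by (simp add: add.commute)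
  also have "\<dots> = a^m * (\<Sum>p=1..m'. a^p * tbinz b (v + m + p - 1) d)"
    by (simp add: sum_distrib_left power_add algebra_simps)
  finally have S3: "(\<Sum>p=Suc m..m+m'. a^p * tbinz b (v + p - 1) d)
      = a^m * (\<Sum>p=1..m'. a^p * tbinz b (v + m + p - 1) d)" .
  have P: "tbinz b (v + m) (d + 1) = tbinz b (v + m - 1) (d + 1) + tbinz b (v + m - 1) d"
    using tbinz_Suc[of b "v + m - 1" "d+1"] assms by simp
  have "v + m + m' - v = m + m'" "v + m - 1 - v = m - 1" "v + m + m' - (v + m) = m'" by auto
  then show ?thesis
    unfolding hess_entry_def using S1 S2 S3 P by (simp add: tbinz_def algebra_simps)
qed

definition hess_col :: "real \<Rightarrow> real \<Rightarrow> (nat \<Rightarrow> nat) \<Rightarrow> nat \<Rightarrow> nat \<Rightarrow> real" where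
  "hess_col a b f j d = hess_entry a b (f j) (f (Suc j)) (int d)"

lemma hess_det_Suc_trailing_zeros:
  assumes "f (Suc k) = 0" "f (Suc (Suc k)) = 0"
  shows "hess_det (hess_col a b f) (Suc k) = b * hess_det (hess_col a b f) k"
proof -
  have "hess_det (hess_col a b f) (Suc k) = (\<Sum>u\<le>k. if u = k then b * hess_det (hess_col a b f) k else 0)"
    unfolding hess_det.simps by (rule sum.cong) (auto simp: hess_col_def hess_entry_def assms binz_0_left)
  thus ?thesis by simp
qed

text \<open>The columns of f, f' and f'' below are those of the words X10Y, X1Y and X0Y, where the
  distinguished particle is the r-th one.\<close>

lemma hess_det_bulk_column:
  assumes r: "r \<ge> 2"
    and low: "\<And>s. 1 \<le> s \<Longrightarrow> s \<le> r - 1 \<Longrightarrow>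
                hess_det (hess_col a b f) s = hess_det (hess_col a b f') s + hess_det (hess_col a b f) (s - 1)"
    and f1: "f r = Suc (f' r)" and f2: "f' (Suc r) = f (Suc r)"
    and f3: "\<And>j. j < r \<Longrightarrow> f'' j = f j" and f4: "f'' r = f (Suc r)"
    and mpos: "f r > f (Suc r)" and dec: "f (r - 1) \<ge> f r"
  shows "hess_det (hess_col a b f) r = hess_det (hess_col a b f') r + hess_det (hess_col a b f'') (r - 1)"
proof -
  let ?c = "hess_col a b f" and ?c' = "hess_col a b f'" and ?c'' = "hess_col a b f''"
  define v where "v = f (Suc r)"
  define m where "m = f r - f (Suc r)"
  define m' where "m' = f (r - 1) - f r"
  have fm: "f r = v + m" "m \<ge> 1" "f (r - 1) = v + m + m'"
    using mpos dec by (auto simp: v_def m_def m'_def)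
  have e1: "f' r = v + m - 1" "f' (Suc r) = v" using f1 f2 fm by (auto simp: v_def)
  have e2: "f'' (r - 1) = v + m + m'" "f'' r = v" using f3[of "r-1"] f4 r fm by (auto simp: v_def)
  have rr: "Suc (r - 1) = r" using r by simp
  have "hess_det ?c (Suc (r - 1)) = hess_det ?c' (Suc (r - 1)) + hess_det ?c'' (r - 1)"
  proof (rule hess_det_split_column[where \<delta> = "a^m"])
    show "r - 1 = Suc (r - 2)" using r by simp
    show "hess_det ?c s = hess_det ?c' s + hess_det ?c (s - 1)" if "1 \<le> s" "s \<le> r - 1" for s
      using low that by blast
    show "?c'' j = ?c j" if "1 \<le> j" "j < r - 1" for j
      using that by (auto simp: hess_col_def f3)
    show "?c (Suc (r - 1)) 0 = ?c' (Suc (r - 1)) 0 + a^m"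
      using hess_entry_diff[OF fm(2), of a b v 0] fm e1 r by (simp add: hess_col_def Suc_diff_le v_def)
    show "?c (Suc (r - 1)) (Suc d) - ?c' (Suc (r - 1)) (Suc d) - ?c' (Suc (r - 1)) d
        + ?c'' (r - 1) d - a^m * ?c (r - 1) d = 0" for d
      using hess_entry_shift[OF fm(2), of a b v "int d" m'] hess_entry_diff[OF fm(2), of a b v "int d + 1"] fm e1 e2 rr
      by (simp add: hess_col_def v_def algebra_simps)
  qed
  thus ?thesis unfolding rr .
qed

lemma hess_det_bulk:
  assumes r: "r \<ge> 1" and k: "k \<ge> r"
    and f1: "\<And>j. 1 \<le> j \<Longrightarrow> j \<le> r \<Longrightarrow> f j = Suc (f' j)"
    and f2: "\<And>j. r < j \<Longrightarrow> f' j = f j"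
    and f3: "\<And>j. j < r \<Longrightarrow> f'' j = f j"
    and f4: "\<And>j. r \<le> j \<Longrightarrow> f'' j = f (Suc j)"
    and mpos: "f r > f (Suc r)"
    and dec: "r \<ge> 2 \<Longrightarrow> f (r - 1) \<ge> f r"
    and \<kappa>: "\<kappa> = (if r = 1 then a^(f 1 - f 2) else 1)"
  shows "hess_det (hess_col a b f) k = hess_det (hess_col a b f') k + \<kappa> * hess_det (hess_col a b f'') (k - 1)"
proof -
  let ?c = "hess_col a b f" and ?c' = "hess_col a b f'" and ?c'' = "hess_col a b f''"
  have low: "hess_det ?c (Suc s) = hess_det ?c' (Suc s) + hess_det ?c s" if "s < r - 1" for s
  proof (rule hess_det_Suc_shift[where N = "r - 1"])
    fix j assume j: "1 \<le> j" "j \<le> r - 1"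
    then have e: "f j = Suc (f' j)" "f (Suc j) = Suc (f' (Suc j))" using f1 by auto
    show "?c j 0 = ?c' j 0 + 1"
      unfolding hess_col_def e hess_entry_Suc by (simp add: hess_entry_subdiag)
    show "?c j (Suc d) = ?c' j (Suc d) + ?c' j d" for d
      unfolding hess_col_def e hess_entry_Suc by simp
  qed (use that in auto)
  have below: "hess_det ?c s = hess_det ?c' s + (if s = 0 then 0 else \<kappa> * hess_det ?c'' (s-1))"
    if "s \<le> r" for s
  proof (cases "s = 0 \<or> s < r")
    case True
    show ?thesis
    proof (cases "s = 0")
      case False
      with True have s: "s < r" "r \<ge> 2" by auto
      have "hess_det ?c'' (s-1) = hess_det ?c (s-1)"
        by (rule hess_det_cong) (use s in \<open>auto simp: hess_col_def f3\<close>)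
      moreover have "hess_det ?c s = hess_det ?c' s + hess_det ?c (s-1)"
        using low[of "s-1"] s False by (cases s) auto
      ultimately show ?thesis using s \<kappa> False by simp
    qed simp
  next
    case False
    then have s: "s = r" "s \<noteq> 0" using that by auto
    show ?thesis
    proof (cases "r = 1")
      case True
      define v where "v = f 2"
      define m where "m = f 1 - f 2"
      have fm: "f 1 = v + m" "m \<ge> 1" using mpos True by (auto simp: v_def m_def numeral_2_eq_2)
      have "f' 1 = v + m - 1" "f' 2 = v" using f1[of 1] f2[of 2] True fm by (auto simp: v_def)
      then show ?thesis using s True \<kappa> hess_entry_diff[OF fm(2), of a b v 0] fm
        by (simp add: hess_col_def m_def v_def numeral_2_eq_2)
    next
      case False
      then have r2: "r \<ge> 2" using r by auto
      have "hess_det ?c r = hess_det ?c' r + hess_det ?c'' (r - 1)"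
      proof (rule hess_det_bulk_column[OF r2 _ f1 f2 f3 f4 mpos dec[OF r2]])
        show "hess_det ?c s = hess_det ?c' s + hess_det ?c (s - 1)" if "1 \<le> s" "s \<le> r - 1" for s
          using low[of "s - 1"] that by (cases s) auto
      qed (use r in auto)
      then show ?thesis using s r2 \<kappa> by simp
    qed
  qed
  have "hess_det ?c k = hess_det ?c' k + (if k = 0 then 0 else \<kappa> * hess_det ?c'' (k-1))"
  proof (rule hess_det_extend[OF r below])
    show "?c' j = ?c j" if "r < j" for j using that by (auto simp: hess_col_def f2 fun_eq_iff)
    show "?c'' (j - 1) = ?c j" if "r < j" for j using that by (auto simp: hess_col_def f4 fun_eq_iff)
  qed
  thus ?thesis using r k by simp
qed

section \<open>The weight of a word\<close>

definition count_zeros :: "bool list \<Rightarrow> nat" where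
  "count_zeros w = length (filter Not w)"

definition count_ones :: "bool list \<Rightarrow> nat" where
  "count_ones w = length (filter (\<lambda>x. x) w)"

definition lead_zeros :: "bool list \<Rightarrow> nat" where
  "lead_zeros w = length (takeWhile Not w)"

text \<open>With a = 1/alpha and b = 1/beta, weight a b t is the numerator of the claimed formula
  divided by (alpha beta)^n.\<close>

definition weight :: "real \<Rightarrow> real \<Rightarrow> bool list \<Rightarrow> real" where
  "weight a b w = a ^ lead_zeros w * hess_det (hess_col a b (lam w)) (count_ones w)"

lemma lam_list_Nil [simp]: "lam_list [] = []"
  by (simp add: lam_list_def)

lemma lam_list_Cons: "lam_list (x # w) = (if x then [count_zeros w] else []) @ lam_list w"
proof -
  have "[0..<Suc (length w)] = 0 # map Suc [0..<length w]"
    by (simp add: upt_conv_Cons map_Suc_upt del: upt_Suc)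
  then show ?thesis
    unfolding lam_list_def count_zeros_def by (simp add: filter_map o_def del: upt_Suc)
qed

lemma lam_list_True [simp]: "lam_list (True # w) = count_zeros w # lam_list w"
  and lam_list_False [simp]: "lam_list (False # w) = lam_list w"
  by (simp_all add: lam_list_Cons)

lemma count_zeros_simps [simp]:
  "count_zeros [] = 0" "count_zeros (True # w) = count_zeros w"
  "count_zeros (False # w) = Suc (count_zeros w)" "count_zeros (X @ Y) = count_zeros X + count_zeros Y"
  by (auto simp: count_zeros_def)

lemma count_ones_simps [simp]:
  "count_ones [] = 0" "count_ones (True # w) = Suc (count_ones w)"
  "count_ones (False # w) = count_ones w" "count_ones (X @ Y) = count_ones X + count_ones Y"
  by (auto simp: count_ones_def)

lemma length_lam_list [simp]: "length (lam_list w) = count_ones w"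
  by (induction w) (auto simp: lam_list_Cons)

lemma lam_list_append: "lam_list (X @ Y) = map (\<lambda>l. l + count_zeros Y) (lam_list X) @ lam_list Y"
  by (induction X) (auto simp: lam_list_Cons)

lemma lam_list_le_count_zeros: "l \<in> set (lam_list w) \<Longrightarrow> l \<le> count_zeros w"
proof (induction w)
  case (Cons x w) thus ?case by (cases x) auto
qed simp

lemma lead_zeros_add_lam_1: "lead_zeros w + lam w 1 = count_zeros w"
proof (induction w)
  case Nil thus ?case by (simp add: lead_zeros_def lam_def)
next
  case (Cons x w)
  have "lam (False # w) 1 = lam w 1" by (simp add: lam_def)
  with Cons show ?case by (cases x) (simp_all add: lead_zeros_def lam_def)
qed

lemma lead_zeros_Cons [simp]:
  "lead_zeros (False # w) = Suc (lead_zeros w)" "lead_zeros (True # w) = 0"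
  by (simp_all add: lead_zeros_def)

lemma lead_zeros_append:
  "lead_zeros (X @ Y) = (if True \<in> set X then lead_zeros X else length X + lead_zeros Y)"
proof -
  have "(\<forall>x\<in>set X. \<not> x) \<longleftrightarrow> True \<notin> set X" by auto
  thus ?thesis by (auto simp: lead_zeros_def takeWhile_append)
qed

lemma weight_Nil: "weight a b [] = 1"
  by (simp add: weight_def lead_zeros_def)

lemma weight_Cons_False: "weight a b (False # w) = a * weight a b w"
proof -
  have "lam (False # w) = lam w" by (simp add: lam_def fun_eq_iff)
  thus ?thesis by (simp add: weight_def)
qed

lemma weight_snoc_True: "weight a b (w @ [True]) = b * weight a b w"
proof -
  have "lam_list (w @ [True]) = lam_list w @ [0]"
    by (simp add: lam_list_append)
  then have lam: "lam (w @ [True]) = lam w"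
    by (auto simp: lam_def fun_eq_iff nth_append)
  have "lead_zeros (w @ [True]) = lead_zeros w"
  proof (cases "True \<in> set w")
    case False
    then have "takeWhile Not w = w" by (auto simp: takeWhile_eq_all_conv)
    moreover have "lead_zeros (w @ [True]) = length w + lead_zeros [True]"
      using False by (simp add: lead_zeros_append)
    ultimately show ?thesis by (simp add: lead_zeros_def del: takeWhile_eq_all_conv)
  qed (simp add: lead_zeros_append)
  moreover have "hess_det (hess_col a b (lam w)) (Suc (count_ones w)) = b * hess_det (hess_col a b (lam w)) (count_ones w)"
    by (rule hess_det_Suc_trailing_zeros) (auto simp: lam_def)
  ultimately show ?thesis by (simp add: weight_def lam)
qed

lemma hess_det_lam_bulk:
  fixes X Y :: "bool list"
  defines "k \<equiv> count_ones (X @ True # False # Y)"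
  shows "hess_det (hess_col a b (lam (X @ True # False # Y))) k
       = hess_det (hess_col a b (lam (X @ True # Y))) k
       + (if count_ones X = 0 then a ^ Suc (lead_zeros Y) else 1)
         * hess_det (hess_col a b (lam (X @ False # Y))) (k - 1)"
proof -
  define LX where "LX = lam_list X"
  define LY where "LY = lam_list Y"
  define z where "z = count_zeros Y"
  define p where "p = count_ones X"
  have lenLX: "length LX = p" by (simp add: LX_def p_def)
  define f where "f = lam (X @ True # False # Y)"
  define f' where "f' = lam (X @ True # Y)"
  define f'' where "f'' = lam (X @ False # Y)"
  have L: "lam_list (X @ True # False # Y) = map (\<lambda>l. l + Suc z) LX @ Suc z # LY"
    and L': "lam_list (X @ True # Y) = map (\<lambda>l. l + z) LX @ z # LY"
    and L'': "lam_list (X @ False # Y) = map (\<lambda>l. l + Suc z) LX @ LY"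
    by (simp_all add: lam_list_append LX_def LY_def z_def)
  have fv: "f j = (if 1 \<le> j \<and> j \<le> p then LX ! (j - 1) + Suc z else if j = Suc p then Suc z
      else if Suc p < j \<and> j \<le> Suc p + length LY then LY ! (j - Suc (Suc p)) else 0)" for j
    unfolding f_def lam_def L using lenLX by (auto simp: nth_append nth_Cons' Suc_diff_Suc)
  have fv': "f' j = (if 1 \<le> j \<and> j \<le> p then LX ! (j - 1) + z else if j = Suc p then z
      else if Suc p < j \<and> j \<le> Suc p + length LY then LY ! (j - Suc (Suc p)) else 0)" for j
    unfolding f'_def lam_def L' using lenLX by (auto simp: nth_append nth_Cons' Suc_diff_Suc)
  have fv'': "f'' j = (if 1 \<le> j \<and> j \<le> p then LX ! (j - 1) + Suc z
      else if p < j \<and> j \<le> p + length LY then LY ! (j - Suc p) else 0)" for j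
    unfolding f''_def lam_def L'' using lenLX by (auto simp: nth_append)
  have k: "k = Suc p + count_ones Y" by (simp add: k_def p_def)
  have LY_hd: "LY ! 0 \<le> z" if "LY \<noteq> []"
    by (metis LY_def z_def length_greater_0_conv nth_mem lam_list_le_count_zeros that)
  have hd: "hess_det (hess_col a b f) k = hess_det (hess_col a b f') k
      + (if Suc p = 1 then a^(f 1 - f 2) else 1) * hess_det (hess_col a b f'') (k - 1)"
  proof (rule hess_det_bulk[where r = "Suc p"])
    show "Suc p \<le> k" by (simp add: k)
    show "f j = Suc (f' j)" if "1 \<le> j" "j \<le> Suc p" for j using that by (simp add: fv fv')
    show "f' j = f j" if "Suc p < j" for j using that by (simp add: fv fv')
    show "f'' j = f j" if "j < Suc p" for j using that by (simp add: fv fv'')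
    show "f'' j = f (Suc j)" if "Suc p \<le> j" for j using that by (auto simp: fv fv'')
    show "f (Suc (Suc p)) < f (Suc p)" using LY_hd by (cases "LY = []") (auto simp: fv)
    show "f (Suc p - 1) \<ge> f (Suc p)" if "2 \<le> Suc p" using that by (auto simp: fv)
  qed auto
  moreover have "f 1 - f 2 = Suc (lead_zeros Y)" if "p = 0"
  proof -
    have "f 2 = lam Y 1" using that by (auto simp: fv lam_def LY_def numeral_2_eq_2)
    moreover have "f 1 = Suc z" using that by (simp add: fv)
    ultimately show ?thesis using lead_zeros_add_lam_1[of Y] by (simp add: z_def)
  qed
  ultimately show ?thesis unfolding f_def f'_def f''_def p_def by auto
qed

text \<open>The bulk relation of the matrix ansatz (DE = D + E): a particle followed by a hole can be
  replaced by either letter alone.\<close>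

lemma weight_bulk: "weight a b (X @ True # False # Y) = weight a b (X @ True # Y) + weight a b (X @ False # Y)"
proof -
  define k where "k = count_ones (X @ True # False # Y)"
  have np: "count_ones (X @ True # Y) = k" "count_ones (X @ False # Y) = k - 1" by (auto simp: k_def)
  have "count_ones X = 0 \<longleftrightarrow> True \<notin> set X" by (auto simp: count_ones_def filter_empty_conv)
  then show ?thesis using hess_det_lam_bulk[where X=X and Y=Y and a=a and b=b] unfolding weight_def k_def[symmetric] np
    by (cases "True \<in> set X") (simp_all add: lead_zeros_append algebra_simps power_add del: hess_det.simps)
qed

lemma split_True_False:
  "j < length w \<Longrightarrow> w ! j \<Longrightarrow> \<not> last w \<Longrightarrow> \<exists>X Y. w = X @ True # False # Y"
proof (induction w arbitrary: j)
  case (Cons x w)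
  show ?case
  proof (cases "w = []")
    case True thus ?thesis using Cons.prems by auto
  next
    case wne: False
    then have lw: "\<not> last w" using Cons.prems by simp
    show ?thesis
    proof (cases x)
      case True
      show ?thesis
      proof (cases "hd w")
        case False
        then have "x # w = [] @ True # False # tl w" using \<open>x\<close> wne by (metis list.collapse append_Nil)
        thus ?thesis by blast
      next
        case True
        then have "w ! 0" using wne by (simp add: hd_conv_nth)
        then obtain X Y where "w = X @ True # False # Y" using Cons.IH[of 0] wne lw by auto
        then have "x # w = (x # X) @ True # False # Y" by simp
        thus ?thesis by blast
      qed
    next
      case False
      then have "w ! (j - 1)" "j - 1 < length w" using Cons.prems by (cases j; auto)+
      then obtain X Y where "w = X @ True # False # Y" using Cons.IH[of "j - 1"] lw by auto
      then have "x # w = (x # X) @ True # False # Y" by simp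
      thus ?thesis by blast
    qed
  qed
qed simp

lemma weight_pos:
  assumes "0 < a" and "0 < b"
  shows "0 < weight a b w"
proof (induction "length w" arbitrary: w rule: less_induct)
  case less
  show ?case
  proof (cases w)
    case Nil thus ?thesis by (simp add: weight_Nil)
  next
    case (Cons x w')
    show ?thesis
    proof (cases x)
      case False
      thus ?thesis using less[of w'] Cons assms by (simp add: weight_Cons_False)
    next
      case x: True
      show ?thesis
      proof (cases "last w")
        case True
        then have "w = butlast w @ [True]" using Cons by (metis append_butlast_last_id list.distinct(1))
        moreover have "0 < weight a b (butlast w)" using less[of "butlast w"] Cons by simp
        ultimately show ?thesis using assms by (metis weight_snoc_True mult_pos_pos)
      next
        case False
        then obtain X Y where w: "w = X @ True # False # Y"
          using split_True_False[of 0 w] Cons x by auto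
        have "0 < weight a b (X @ True # Y)" "0 < weight a b (X @ False # Y)" using less w by auto
        thus ?thesis unfolding w weight_bulk by simp
      qed
    qed
  qed
qed

lemma weight_replicate_True: "weight a b (replicate m True) = b ^ m"
proof (induction m)
  case (Suc m)
  have "replicate (Suc m) True = replicate m True @ [True]" by (simp add: replicate_append_same)
  thus ?case using Suc by (simp add: weight_snoc_True)
qed (simp add: weight_Nil)

lemma weight_replicate_True_False:
  "weight a b (replicate m True @ False # w) = (\<Sum>s=1..m. weight a b (replicate s True @ w)) + a * weight a b w"
proof (induction m)
  case 0 thus ?case by (simp add: weight_Cons_False)
next
  case (Suc m)
  have "replicate (Suc m) True @ False # w = replicate m True @ True # False # w"
    and "replicate m True @ True # w = replicate (Suc m) True @ w"
    by (simp_all add: replicate_append_same[symmetric])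
  with Suc show ?case by (simp add: weight_bulk)
qed

section \<open>The partition function\<close>

text \<open>weight_stack a b p w = (\<Sum>s\<le>p. a^(p-s) * weight a b (replicate s True @ w)).\<close>

fun weight_stack :: "real \<Rightarrow> real \<Rightarrow> nat \<Rightarrow> bool list \<Rightarrow> real" where
  "weight_stack a b 0 w = weight a b w"
| "weight_stack a b (Suc p) w = weight a b (replicate (Suc p) True @ w) + a * weight_stack a b p w"

lemma weight_stack_Cons:
  "weight_stack a b p (True # w) + weight_stack a b p (False # w) = (\<Sum>q=1..Suc p. weight_stack a b q w)"
proof (induction p)
  case 0 thus ?case by (simp add: weight_Cons_False)
next
  case (Suc p)
  have "(\<Sum>q=1..Suc (Suc p). weight_stack a b q w) = (\<Sum>q=0..Suc p. weight_stack a b (Suc q) w)"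
    using sum.shift_bounds_cl_Suc_ivl[of "\<lambda>q. weight_stack a b q w" 0 "Suc p"] by simp
  also have "\<dots> = (\<Sum>q=0..Suc p. weight a b (replicate (Suc q) True @ w)) + a * (\<Sum>q=0..Suc p. weight_stack a b q w)"
    by (simp only: weight_stack.simps sum.distrib sum_distrib_left)
  also have "(\<Sum>q=0..Suc p. weight a b (replicate (Suc q) True @ w)) = (\<Sum>s=1..Suc (Suc p). weight a b (replicate s True @ w))"
    using sum.shift_bounds_cl_Suc_ivl[of "\<lambda>s. weight a b (replicate s True @ w)" 0 "Suc p"] by simp
  also have "(\<Sum>q=0..Suc p. weight_stack a b q w) = weight a b w + (\<Sum>q=1..Suc p. weight_stack a b q w)"
    by (simp add: sum.atLeast_Suc_atMost[of 0])
  finally have R: "(\<Sum>q=1..Suc (Suc p). weight_stack a b q w)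
      = (\<Sum>s=1..Suc (Suc p). weight a b (replicate s True @ w)) + a * (weight a b w + (\<Sum>q=1..Suc p. weight_stack a b q w))" .
  have e: "replicate (Suc p) True @ True # w = replicate (Suc (Suc p)) True @ w"
    by (simp add: replicate_append_same[symmetric])
  show ?case
    unfolding R weight_stack.simps(2) e weight_replicate_True_False Suc.IH[symmetric] distrib_left sum_distrib_left
    by (simp add: algebra_simps)
qed

lemma weight_stack_Nil: "weight_stack a b p [] = (\<Sum>c=0..p. a^c * b^(p - c))"
proof (induction p)
  case 0 thus ?case by (simp add: weight_Nil)
next
  case (Suc p)
  have "(\<Sum>c=0..Suc p. a^c * b^(Suc p - c)) = b^(Suc p) + (\<Sum>c=Suc 0..Suc p. a^c * b^(Suc p - c))"
    by (simp add: sum.atLeast_Suc_atMost)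
  also have "(\<Sum>c=Suc 0..Suc p. a^c * b^(Suc p - c)) = (\<Sum>c=0..p. a^(Suc c) * b^(Suc p - Suc c))"
    by (rule sum.shift_bounds_cl_Suc_ivl)
  also have "\<dots> = a * (\<Sum>c=0..p. a^c * b^(p - c))"
    by (simp add: sum_distrib_left algebra_simps)
  finally show ?case using Suc weight_replicate_True[of a b "Suc p"] by simp
qed

definition up_sum :: "(nat \<Rightarrow> real) \<Rightarrow> nat \<Rightarrow> real" where
  "up_sum R p = (\<Sum>q=1..Suc p. R q)"

lemma sum_lists_length_Suc:
  "(\<Sum>w\<in>{w. length w = Suc n}. f w)
     = (\<Sum>w\<in>{w. length w = n}. f (True # w)) + (\<Sum>w\<in>{w. length w = n}. f (False # w))"
proof -
  let ?A = "{w :: bool list. length w = n}"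
  have e: "{w. length w = Suc n} = Cons True ` ?A \<union> Cons False ` ?A"
  proof (intro equalityI subsetI)
    fix w :: "bool list" assume "w \<in> {w. length w = Suc n}"
    then obtain x w' where "w = x # w'" "length w' = n" by (cases w) auto
    thus "w \<in> Cons True ` ?A \<union> Cons False ` ?A" by (cases x) auto
  qed auto
  show ?thesis unfolding e
    by (subst sum.union_disjoint) (auto simp: sum.reindex finite_list_length)
qed

lemma sum_weight_stack: "(\<Sum>w\<in>{w. length w = n}. weight_stack a b p w) = ((up_sum ^^ n) (\<lambda>q. weight_stack a b q [])) p"
proof (induction n arbitrary: p)
  case 0
  have "{w :: bool list. length w = 0} = {[]}" by auto
  thus ?case by simp
next
  case (Suc n)
  have "(\<Sum>w\<in>{w. length w = Suc n}. weight_stack a b p w) = (\<Sum>w\<in>{w. length w = n}. \<Sum>q=1..Suc p. weight_stack a b q w)"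
    by (simp add: sum_lists_length_Suc sum.distrib[symmetric] weight_stack_Cons)
  also have "\<dots> = (\<Sum>q=1..Suc p. \<Sum>w\<in>{w. length w = n}. weight_stack a b q w)"
    by (rule sum.swap)
  finally show ?case by (simp add: Suc.IH up_sum_def)
qed

fun ballot :: "nat \<Rightarrow> nat \<Rightarrow> real" where
  "ballot 0 q = (if q = 0 then 1 else 0)"
| "ballot (Suc n) q = (if q = 0 then 0 else (\<Sum>r=q-1..n. ballot n r))"

lemma sum_triangle_swap:
  "(\<Sum>q\<le>n. \<Sum>r=1..Suc q. h q r) = (\<Sum>r=1..Suc n. \<Sum>q=r-1..n. h q r)"
proof -
  have "(\<Sum>q\<le>n. \<Sum>r=1..Suc q. h q r) = (\<Sum>q\<in>{..n}. \<Sum>r\<in>{r\<in>{1..Suc n}. r \<le> Suc q}. h q r)"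
    by (intro sum.cong refl) auto
  also have "\<dots> = (\<Sum>r\<in>{1..Suc n}. \<Sum>q\<in>{q\<in>{..n}. r \<le> Suc q}. h q r)"
    by (rule sum.swap_restrict) auto
  also have "\<dots> = (\<Sum>r=1..Suc n. \<Sum>q=r-1..n. h q r)"
    by (intro sum.cong refl) auto
  finally show ?thesis .
qed

lemma up_sum_power_0: "((up_sum ^^ n) R) 0 = (\<Sum>q\<le>n. ballot n q * R q)"
proof (induction n arbitrary: R)
  case (Suc n)
  have "((up_sum ^^ Suc n) R) 0 = ((up_sum ^^ n) (up_sum R)) 0" by (simp only: funpow_Suc_right o_apply)
  also have "\<dots> = (\<Sum>q\<le>n. ballot n q * (\<Sum>r=1..Suc q. R r))" by (simp add: Suc.IH up_sum_def)
  also have "\<dots> = (\<Sum>r=1..Suc n. \<Sum>q=r-1..n. ballot n q * R r)"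
    unfolding sum_distrib_left by (rule sum_triangle_swap)
  also have "\<dots> = (\<Sum>r\<in>{1..Suc n}. ballot (Suc n) r * R r)"
    by (rule sum.cong) (auto simp: sum_distrib_right)
  also have "\<dots> = (\<Sum>r\<le>Suc n. ballot (Suc n) r * R r)"
    by (rule sum.mono_neutral_left) auto
  finally show ?case .
qed simp

definition ballot_formula :: "nat \<Rightarrow> nat \<Rightarrow> real" where
  "ballot_formula n q = (if 1 \<le> q \<and> q \<le> n then real q / real (2*n - q) * real ((2*n - q) choose n) else 0)"

lemma ballot_formula_rec:
  assumes q: "1 \<le> q" "q \<le> n"
  shows "ballot_formula (Suc n) q = ballot_formula (Suc n) (Suc q) + ballot_formula n (q - 1)"
proof -
  define N where "N = 2*n + 1 - q"
  have N1: "2 * Suc n - q = Suc N" "2 * Suc n - Suc q = N" "2 * n - (q - 1) = N" using q by (auto simp: N_def)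
  have Npos: "real N > 0" using q by (simp add: N_def)
  define x where "x = real (N choose n)"
  define y where "y = real (N choose Suc n)"
  define z where "z = real (Suc N choose Suc n)"
  have h1: "z * (n+1) = (N+1) * x"
    using Suc_times_binomial[of n N] unfolding x_def z_def by (simp add: algebra_simps flip: of_nat_mult)
  have h2: "z = x + y" unfolding x_def y_def z_def by simp
  have h3: "real N = 2 * real n + 1 - real q" using q by (simp add: N_def of_nat_diff)
  have lhs: "ballot_formula (Suc n) q = real q / (real N + 1) * z"
    using q unfolding ballot_formula_def N1 z_def by (simp del: binomial_Suc_Suc)
  have r1: "ballot_formula (Suc n) (Suc q) = (real q + 1) / real N * y"
    using q unfolding ballot_formula_def N1 y_def by (simp del: binomial_Suc_Suc)
  have r2: "ballot_formula n (q - 1) = (real q - 1) / real N * x"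
  proof (cases "q = 1")
    case False then have "1 \<le> q - 1" "q - 1 \<le> n" using q by auto
    then show ?thesis using q unfolding ballot_formula_def N1 x_def by simp
  qed (simp add: ballot_formula_def)
  have "real q * z * real N - (real N + 1) * ((real q + 1) * y + (real q - 1) * x)
      = z * (2 * real n + 1 - real q - real N) - 2 * (z * (real n + 1) - (real N + 1) * x)"
    using h2 by (simp add: algebra_simps)
  also have "\<dots> = 0"
  proof -
    have "2 * real n + 1 - real q - real N = 0" using h3 by simp
    moreover have "z * (real n + 1) - (real N + 1) * x = 0" using h1 by (simp add: algebra_simps)
    ultimately show ?thesis by simp
  qed
  finally have key: "real q * z * real N = (real N + 1) * ((real q + 1) * y + (real q - 1) * x)" by simp
  have "(real q + 1) / real N * y + (real q - 1) / real N * x = ((real q + 1) * y + (real q - 1) * x) / real N"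
    by (simp add: add_divide_distrib diff_divide_distrib algebra_simps)
  moreover have "real q / (real N + 1) * z = ((real q + 1) * y + (real q - 1) * x) / real N"
    using key Npos by (simp add: frac_eq_eq algebra_simps add_pos_pos)
  ultimately show ?thesis unfolding lhs r1 r2 by simp
qed

lemma sum_ballot_formula:
  assumes n: "n \<ge> 1"
  shows "j \<le> n \<Longrightarrow> (\<Sum>r=n-j..n. ballot_formula n r) = ballot_formula (Suc n) (Suc n - j)"
proof (induction j)
  case 0
  have "2 * n - n = n" by simp
  thus ?case using n by (simp add: ballot_formula_def)
next
  case (Suc j)
  have "{n - Suc j..n} = insert (n - Suc j) {n - j..n}" using Suc.prems by auto
  then have "(\<Sum>r=n-Suc j..n. ballot_formula n r) = ballot_formula n (n - Suc j) + (\<Sum>r=n-j..n. ballot_formula n r)"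
    using Suc.prems by simp
  also have "\<dots> = ballot_formula n (n - Suc j) + ballot_formula (Suc n) (Suc n - j)" using Suc by simp
  also have "\<dots> = ballot_formula (Suc n) (n - j)"
    using ballot_formula_rec[of "n - j" n] Suc.prems by (simp add: Suc_diff_le)
  finally show ?case by (simp add: Suc_diff_le)
qed

lemma ballot_eq_formula: "n \<ge> 1 \<Longrightarrow> ballot n q = ballot_formula n q"
proof (induction n arbitrary: q rule: nat_induct_at_least)
  case base
  show ?case by (cases q) (auto simp: ballot_formula_def)
next
  case (Suc n)
  show ?case
  proof (cases "q = 0 \<or> q > Suc n")
    case False
    then have "Suc n - q \<le> n" by auto
    from False have "ballot (Suc n) q = (\<Sum>r=n - (Suc n - q)..n. ballot_formula n r)"
      using Suc.IH by (simp add: Suc_diff_le)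
    also have "\<dots> = ballot_formula (Suc n) q"
      using sum_ballot_formula[of n "Suc n - q"] \<open>Suc n - q \<le> n\<close> Suc.hyps False by simp
    finally show ?thesis .
  qed (auto simp: ballot_formula_def)
qed

lemma sum_weight:
  assumes "n \<ge> 1"
  shows "(\<Sum>w\<in>{w. length w = n}. weight a b w) = (\<Sum>p=1..n. ballot_formula n p * (\<Sum>c=0..p. a^c * b^(p - c)))"
proof -
  have "(\<Sum>w\<in>{w. length w = n}. weight a b w) = (\<Sum>w\<in>{w. length w = n}. weight_stack a b 0 w)" by simp
  also have "\<dots> = ((up_sum ^^ n) (\<lambda>q. weight_stack a b q [])) 0" by (rule sum_weight_stack)
  also have "\<dots> = (\<Sum>q\<le>n. ballot_formula n q * weight_stack a b q [])"
    using ballot_eq_formula assms by (simp add: up_sum_power_0)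
  also have "\<dots> = (\<Sum>q\<in>{1..n}. ballot_formula n q * weight_stack a b q [])"
    by (rule sum.mono_neutral_right) (auto simp: ballot_formula_def)
  finally show ?thesis by (simp add: weight_stack_Nil)
qed

section \<open>Stationarity of the weights\<close>

definition can_hop :: "bool list \<Rightarrow> nat \<Rightarrow> bool" where
  "can_hop t i \<longleftrightarrow> t ! i \<and> \<not> t ! Suc i"

text \<open>Rates are in units of 1/(n+1).\<close>

definition exit_rate :: "real \<Rightarrow> real \<Rightarrow> bool list \<Rightarrow> real" where
  "exit_rate a b t = (if \<not> t ! 0 then a else 0) + (if t ! (length t - 1) then b else 0)
     + (\<Sum>i<length t - 1. if can_hop t i then 1 else 0)"

definition inflow :: "real \<Rightarrow> real \<Rightarrow> (bool list \<Rightarrow> real) \<Rightarrow> bool list \<Rightarrow> real" where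
  "inflow a b q s =
       (if s ! 0 then a * q (s[0 := False]) else 0)
     + (if \<not> s ! (length s - 1) then b * q (s[length s - 1 := True]) else 0)
     + (\<Sum>i<length s - 1. if \<not> s ! i \<and> s ! Suc i then q (s[i := True, Suc i := False]) else 0)"

lemma sum_list_snd_if_concat:
  "sum_list (map snd (filter P (concat (map (\<lambda>i. if C i then [(u i, p)] else []) xs))))
     = (\<Sum>i\<leftarrow>xs. if C i \<and> P (u i, p) then p else 0)"
  "sum_list (map snd (concat (map (\<lambda>i. if C i then [(u i, p)] else []) xs)))
     = (\<Sum>i\<leftarrow>xs. if C i then p else 0)"
  by (induction xs) auto

lemma sum_list_snd_tasep_moves:
  assumes "length t = n" "n \<ge> 1"
  shows "sum_list (map snd (tasep_moves a b t)) = exit_rate a b t / real (n + 1)"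
proof -
  have "sum_list (map snd (tasep_moves a b t)) =
      (if n \<ge> 1 \<and> \<not> t ! 0 then a / real (n + 1) else 0)
    + (if n \<ge> 1 \<and> t ! (n - 1) then b / real (n + 1) else 0)
    + (\<Sum>i<n - 1. if can_hop t i then 1 / real (n + 1) else 0)"
    unfolding tasep_moves_def Let_def assms(1) can_hop_def
    by (simp add: sum_list_snd_if_concat interv_sum_list_conv_sum_set_nat atLeast0LessThan)
  also have "\<dots> = exit_rate a b t / real (n + 1)"
    unfolding exit_rate_def assms(1) add_divide_distrib sum_divide_distrib
    using assms(2) by (auto intro!: sum.cong)
  finally show ?thesis .
qed

lemma enter_iff:
  assumes "length t = n" "length s = n" "n \<ge> 1"
  shows "(\<not> t ! 0 \<and> t[0 := True] = s) \<longleftrightarrow> (s ! 0 \<and> t = s[0 := False])"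
proof -
  obtain x t' y s' where "t = x # t'" "s = y # s'"
    using assms by (cases t; cases s) auto
  then show ?thesis by auto
qed

lemma exit_iff:
  assumes "length t = n" "length s = n" "n \<ge> 1"
  shows "(t ! (n - 1) \<and> t[n - 1 := False] = s) \<longleftrightarrow> (\<not> s ! (n - 1) \<and> t = s[n - 1 := True])"
proof -
  obtain t' x where t: "t = t' @ [x]" using assms by (cases t rule: rev_cases) auto
  obtain s' y where s: "s = s' @ [y]" using assms by (cases s rule: rev_cases) auto
  have "length t' = n - 1" "length s' = n - 1" using assms t s by auto
  then show ?thesis unfolding t s by (auto simp: list_update_append nth_append)
qed

lemma hop_iff:
  assumes "length t = n" "length s = n" "Suc i < n"
  shows "(can_hop t i \<and> t[i := False, Suc i := True] = s)
     \<longleftrightarrow> ((\<not> s ! i \<and> s ! Suc i) \<and> t = s[i := True, Suc i := False])"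
proof -
  obtain X x y Y where t: "t = X @ x # y # Y" and X: "length X = i"
    using assms(1,3) id_take_nth_drop[of i t] Cons_nth_drop_Suc[of "Suc i" t]
    by (metis length_take min.absorb4 Suc_lessD)
  obtain X' x' y' Y' where s: "s = X' @ x' # y' # Y'" and X': "length X' = i"
    using assms(2,3) id_take_nth_drop[of i s] Cons_nth_drop_Suc[of "Suc i" s]
    by (metis length_take min.absorb4 Suc_lessD)
  show ?thesis unfolding t s can_hop_def using X X'
    by (auto simp: list_update_append nth_append)
qed

lemma sum_list_snd_tasep_moves_to:
  assumes "length t = n" "length s = n" "n \<ge> 1"
  shows "sum_list (map snd (filter (\<lambda>m. fst m = s) (tasep_moves a b t))) =
    ((if s ! 0 \<and> t = s[0 := False] then a else 0)
   + (if \<not> s ! (n - 1) \<and> t = s[n - 1 := True] then b else 0)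
   + (\<Sum>i<n - 1. if (\<not> s ! i \<and> s ! Suc i) \<and> t = s[i := True, Suc i := False] then 1 else 0)) / real (n + 1)"
proof -
  have "sum_list (map snd (filter (\<lambda>m. fst m = s) (tasep_moves a b t))) =
      (if n \<ge> 1 \<and> \<not> t ! 0 \<and> t[0 := True] = s then a / real (n + 1) else 0)
    + (if n \<ge> 1 \<and> t ! (n - 1) \<and> t[n - 1 := False] = s then b / real (n + 1) else 0)
    + (\<Sum>i<n - 1. if can_hop t i \<and> t[i := False, Suc i := True] = s then 1 / real (n + 1) else 0)"
    unfolding tasep_moves_def Let_def assms(1) can_hop_def
    by (simp add: sum_list_snd_if_concat interv_sum_list_conv_sum_set_nat atLeast0LessThan)
  also have "\<dots> = ((if s ! 0 \<and> t = s[0 := False] then a else 0)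
   + (if \<not> s ! (n - 1) \<and> t = s[n - 1 := True] then b else 0)
   + (\<Sum>i<n - 1. if (\<not> s ! i \<and> s ! Suc i) \<and> t = s[i := True, Suc i := False] then 1 else 0)) / real (n + 1)"
    unfolding add_divide_distrib sum_divide_distrib
    using enter_iff[OF assms] exit_iff[OF assms] hop_iff[OF assms(1,2)] assms(3)
    by (auto intro!: sum.cong)
  finally show ?thesis .
qed

lemma sum_mult_if_eq:
  fixes f :: "'a \<Rightarrow> real"
  assumes "finite A" "t0 \<in> A"
  shows "(\<Sum>t\<in>A. f t * (if c \<and> t = t0 then p else 0)) = (if c then f t0 * p else 0)"
proof -
  have "(\<Sum>t\<in>A. f t * (if c \<and> t = t0 then p else 0)) = (\<Sum>t\<in>A. if t = t0 then (if c then f t * p else 0) else 0)"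
    by (rule sum.cong) auto
  also have "\<dots> = (if c then f t0 * p else 0)" using assms by (simp add: sum.delta)
  finally show ?thesis .
qed

lemma finite_tasep_states: "finite (tasep_states n)"
  by (simp add: tasep_states_def finite_list_length)

lemma sum_mult_tasep_P:
  assumes s: "length s = n" and n: "n \<ge> 1"
  shows "(\<Sum>t\<in>tasep_states n. q t * tasep_P a b t s)
       = q s + (inflow a b q s - exit_rate a b s * q s) / real (n + 1)"
proof -
  let ?S = "tasep_states n"
  let ?to = "\<lambda>t. sum_list (map snd (filter (\<lambda>m. fst m = s) (tasep_moves a b t)))"
  have sS: "s \<in> ?S" using s by (simp add: tasep_states_def)
  have upd: "s[0 := False] \<in> ?S" "s[n - 1 := True] \<in> ?S" "s[i := True, Suc i := False] \<in> ?S" for i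
    using s by (auto simp: tasep_states_def)
  have "q t * tasep_P a b t s = q t * ?to t + (if t = s then q t * (1 - sum_list (map snd (tasep_moves a b t))) else 0)"
    for t by (simp add: tasep_P_def distrib_left)
  then have "(\<Sum>t\<in>?S. q t * tasep_P a b t s) = (\<Sum>t\<in>?S. q t * ?to t)
      + (\<Sum>t\<in>?S. if t = s then q t * (1 - sum_list (map snd (tasep_moves a b t))) else 0)"
    by (simp add: sum.distrib)
  also have "(\<Sum>t\<in>?S. if t = s then q t * (1 - sum_list (map snd (tasep_moves a b t))) else 0)
      = q s - exit_rate a b s * q s / real (n + 1)"
    using finite_tasep_states sS by (simp add: sum.delta sum_list_snd_tasep_moves[OF s n] algebra_simps)
  also have "(\<Sum>t\<in>?S. q t * ?to t) =
      ((\<Sum>t\<in>?S. q t * (if s ! 0 \<and> t = s[0 := False] then a else 0))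
     + (\<Sum>t\<in>?S. q t * (if \<not> s ! (n - 1) \<and> t = s[n - 1 := True] then b else 0))
     + (\<Sum>i<n - 1. \<Sum>t\<in>?S. q t * (if (\<not> s ! i \<and> s ! Suc i) \<and> t = s[i := True, Suc i := False] then 1 else 0)))
      / real (n + 1)"
  proof -
    have "q t * ?to t = (q t * (if s ! 0 \<and> t = s[0 := False] then a else 0)
        + q t * (if \<not> s ! (n - 1) \<and> t = s[n - 1 := True] then b else 0)
        + (\<Sum>i<n - 1. q t * (if (\<not> s ! i \<and> s ! Suc i) \<and> t = s[i := True, Suc i := False] then 1 else 0)))
        / real (n + 1)" if "t \<in> ?S" for t
    proof -
      have "length t = n" using that by (simp add: tasep_states_def)
      then show ?thesis
        by (simp only: sum_list_snd_tasep_moves_to[OF _ s n] times_divide_eq_right distrib_left sum_distrib_left)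
    qed
    then show ?thesis
      by (simp add: sum_divide_distrib[symmetric] sum.distrib) (rule sum.swap)
  qed
  also have "\<dots> = inflow a b q s / real (n + 1)"
    unfolding sum_mult_if_eq[OF finite_tasep_states upd(1)] sum_mult_if_eq[OF finite_tasep_states upd(2)]
      sum_mult_if_eq[OF finite_tasep_states upd(3)]
    by (simp add: inflow_def s mult.commute cong: if_cong)
  finally show ?thesis by (simp add: diff_divide_distrib)
qed

text \<open>The balance of the weights is local: the net inflow into s through each transition is a
  difference of signed weights of s with one letter deleted, and these telescope.\<close>

definition deleted_weight :: "real \<Rightarrow> real \<Rightarrow> bool list \<Rightarrow> nat \<Rightarrow> real" where
  "deleted_weight a b s i = (if s ! i then 1 else -1) * weight a b (take i s @ drop (Suc i) s)"

lemma net_inflow_enter: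
  assumes "s \<noteq> []" "\<alpha> > 0"
  shows "(if s ! 0 then \<alpha> * weight (1/\<alpha>) b (s[0 := False]) else 0) - (if \<not> s ! 0 then \<alpha> * weight (1/\<alpha>) b s else 0)
     = deleted_weight (1/\<alpha>) b s 0"
proof -
  obtain x s' where s: "s = x # s'" using assms by (cases s) auto
  show ?thesis using assms(2) unfolding s deleted_weight_def
    by (cases x) (auto simp: weight_Cons_False)
qed

lemma net_inflow_exit:
  assumes "s \<noteq> []" "\<beta> > 0"
  shows "(if \<not> s ! (length s - 1) then \<beta> * weight a (1/\<beta>) (s[length s - 1 := True]) else 0)
       - (if s ! (length s - 1) then \<beta> * weight a (1/\<beta>) s else 0)
     = - deleted_weight a (1/\<beta>) s (length s - 1)"
proof -
  obtain x s' where s: "s = s' @ [x]" using assms by (cases s rule: rev_cases) auto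
  show ?thesis using assms(2) unfolding s deleted_weight_def
    by (cases x) (auto simp: weight_snoc_True list_update_append)
qed

lemma net_inflow_hop:
  assumes "Suc i < length s"
  shows "(if \<not> s ! i \<and> s ! Suc i then weight a b (s[i := True, Suc i := False]) else 0)
       - (if can_hop s i then weight a b s else 0)
     = deleted_weight a b s (Suc i) - deleted_weight a b s i"
proof -
  define X where "X = take i s"
  define Y where "Y = drop (Suc (Suc i)) s"
  define x where "x = s ! i"
  define y where "y = s ! Suc i"
  have "drop (Suc i) s = y # Y" using assms by (simp add: Y_def y_def Cons_nth_drop_Suc)
  then have s: "s = X @ x # y # Y"
    using id_take_nth_drop[of i s] assms unfolding X_def x_def by simp
  have lX: "length X = i" using assms by (simp add: X_def)
  have "s[i := True, Suc i := False] = X @ True # False # Y"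
    "take i s @ drop (Suc i) s = X @ y # Y" "take (Suc i) s @ drop (Suc (Suc i)) s = X @ x # Y"
    "s ! i = x" "s ! Suc i = y"
    unfolding s using lX by (simp_all add: list_update_append nth_append)
  then show ?thesis unfolding deleted_weight_def can_hop_def
    by (cases x; cases y) (auto simp: s weight_bulk)
qed

lemma inflow_weight:
  assumes "s \<noteq> []" "\<alpha> > 0" "\<beta> > 0"
  defines "q \<equiv> weight (1/\<alpha>) (1/\<beta>)"
  shows "inflow \<alpha> \<beta> q s = exit_rate \<alpha> \<beta> s * q s"
proof -
  let ?n = "length s" and ?h = "deleted_weight (1/\<alpha>) (1/\<beta>) s"
  have "(\<Sum>i<?n - 1. (if \<not> s ! i \<and> s ! Suc i then q (s[i := True, Suc i := False]) else 0)
      - (if can_hop s i then q s else 0)) = (\<Sum>i<?n - 1. ?h (Suc i) - ?h i)"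
    unfolding q_def by (intro sum.cong refl net_inflow_hop) auto
  also have "\<dots> = ?h (?n - 1) - ?h 0" by (rule sum_lessThan_telescope)
  finally have H: "(\<Sum>i<?n - 1. (if \<not> s ! i \<and> s ! Suc i then q (s[i := True, Suc i := False]) else 0)
      - (if can_hop s i then q s else 0)) = ?h (?n - 1) - ?h 0" .
  have "exit_rate \<alpha> \<beta> s * q s = (if \<not> s ! 0 then \<alpha> * q s else 0) + (if s ! (?n - 1) then \<beta> * q s else 0)
      + (\<Sum>i<?n - 1. if can_hop s i then q s else 0)"
    unfolding exit_rate_def by (auto simp: distrib_right sum_distrib_right intro!: sum.cong)
  then have "inflow \<alpha> \<beta> q s - exit_rate \<alpha> \<beta> s * q s
      = ((if s ! 0 then \<alpha> * q (s[0 := False]) else 0) - (if \<not> s ! 0 then \<alpha> * q s else 0))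
      + ((if \<not> s ! (?n - 1) then \<beta> * q (s[?n - 1 := True]) else 0) - (if s ! (?n - 1) then \<beta> * q s else 0))
      + (\<Sum>i<?n - 1. (if \<not> s ! i \<and> s ! Suc i then q (s[i := True, Suc i := False]) else 0)
          - (if can_hop s i then q s else 0))"
    unfolding inflow_def sum_subtractf by simp
  also have "\<dots> = 0"
    using H net_inflow_enter[OF assms(1,2)] net_inflow_exit[OF assms(1,3)] unfolding q_def by simp
  finally show ?thesis by simp
qed

lemma weight_balance:
  assumes "length s = n" "n \<ge> 1" "\<alpha> > 0" "\<beta> > 0"
  shows "(\<Sum>t\<in>tasep_states n. weight (1/\<alpha>) (1/\<beta>) t * tasep_P \<alpha> \<beta> t s) = weight (1/\<alpha>) (1/\<beta>) s"
proof -
  have "s \<noteq> []" using assms(1,2) by auto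
  then show ?thesis using sum_mult_tasep_P[OF assms(1,2)] inflow_weight[of s \<alpha> \<beta>] assms(3,4) by simp
qed

section \<open>Uniqueness of the stationary distribution\<close>

lemma stationary_unique:
  fixes P :: "'a \<Rightarrow> 'a \<Rightarrow> real" and S :: "'a set"
  assumes fin: "finite S" and ne: "S \<noteq> {}"
    and qpos: "\<And>t. t \<in> S \<Longrightarrow> q t > 0"
    and qbal: "\<And>s. s \<in> S \<Longrightarrow> (\<Sum>t\<in>S. q t * P t s) = q s"
    and prbal: "\<And>s. s \<in> S \<Longrightarrow> (\<Sum>t\<in>S. pr t * P t s) = pr s"
    and Pnn: "\<And>t s. t \<in> S \<Longrightarrow> s \<in> S \<Longrightarrow> P t s \<ge> 0"
    and R: "\<And>t u. R t u \<Longrightarrow> t \<in> S \<Longrightarrow> u \<in> S \<and> P t u > 0"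
    and conn: "\<And>t u. t \<in> S \<Longrightarrow> u \<in> S \<Longrightarrow> R\<^sup>*\<^sup>* t u"
  shows "\<exists>c. \<forall>t\<in>S. pr t = c * q t"
proof -
  text \<open>g is a nonnegative invariant measure vanishing at t0; it then vanishes on every
    state leading to t0, hence everywhere.\<close>
  define c where "c = Max ((\<lambda>t. pr t / q t) ` S)"
  define g where "g t = c * q t - pr t" for t
  have gnn: "g t \<ge> 0" if "t \<in> S" for t
  proof -
    have "pr t / q t \<le> c" unfolding c_def using fin that by (auto intro: Max_ge)
    thus ?thesis using qpos[OF that] by (simp add: g_def divide_le_eq algebra_simps)
  qed
  have gbal: "(\<Sum>t\<in>S. g t * P t s) = g s" if "s \<in> S" for s
    using qbal[OF that] prbal[OF that]
    by (simp add: g_def algebra_simps sum_subtractf sum_distrib_left[symmetric])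
  have "c \<in> (\<lambda>t. pr t / q t) ` S" unfolding c_def using fin ne by (intro Max_in) auto
  then obtain t0 where t0: "t0 \<in> S" "pr t0 / q t0 = c" by auto
  have g0: "g t0 = 0" using t0 qpos[OF t0(1)] by (simp add: g_def field_simps)
  have gz: "R\<^sup>*\<^sup>* t t0 \<Longrightarrow> t \<in> S \<Longrightarrow> g t = 0" for t
  proof (induction rule: converse_rtranclp_induct)
    case base thus ?case using g0 by simp
  next
    case (step t u)
    have uS: "u \<in> S" and Ppos: "P t u > 0" using R[OF step.hyps(1) step.prems] by auto
    have "(\<Sum>t'\<in>S. g t' * P t' u) = 0" using gbal[OF uS] step.IH uS by simp
    then have "\<forall>t'\<in>S. g t' * P t' u = 0"
      using sum_nonneg_eq_0_iff[OF fin, of "\<lambda>t'. g t' * P t' u"] gnn Pnn uS by auto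
    then have "g t * P t u = 0" using step.prems by auto
    thus ?case using Ppos by simp
  qed
  have "pr t = c * q t" if "t \<in> S" for t
    using gz conn t0(1) that by (fastforce simp: g_def)
  thus ?thesis by blast
qed

definition tasep_step :: "real \<Rightarrow> real \<Rightarrow> bool list \<Rightarrow> bool list \<Rightarrow> bool" where
  "tasep_step a b t u \<longleftrightarrow> u \<in> fst ` set (tasep_moves a b t)"

lemma tasep_step_length: "tasep_step a b t u \<Longrightarrow> length u = length t"
  by (auto simp: tasep_step_def tasep_moves_def Let_def split: if_splits)

lemma tasep_step_enter: "tasep_step a b (False # w) (True # w)"
  by (force simp: tasep_step_def tasep_moves_def)

lemma tasep_step_exit: "tasep_step a b (w @ [True]) (w @ [False])"
proof -
  let ?t = "w @ [True]"
  have "(w @ [False], b / real (length ?t + 1))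
      \<in> set (if length ?t \<ge> 1 \<and> ?t ! (length ?t - 1) then [(?t[length ?t - 1 := False], b / real (length ?t + 1))] else [])"
    by (simp add: nth_append list_update_append)
  then show ?thesis unfolding tasep_step_def tasep_moves_def Let_def set_append by force
qed

lemma tasep_step_hop: "tasep_step a b (X @ True # False # Y) (X @ False # True # Y)"
proof -
  let ?t = "X @ True # False # Y"
  have "?t ! length X \<and> \<not> ?t ! Suc (length X)"
    and "?t[length X := False, Suc (length X) := True] = X @ False # True # Y"
    by (simp_all add: nth_append list_update_append)
  then have "(X @ False # True # Y, 1 / real (length ?t + 1))
      \<in> set (concat (map (\<lambda>i. if ?t ! i \<and> \<not> ?t ! Suc i
           then [(?t[i := False, Suc i := True], 1 / real (length ?t + 1))] else []) [0..<length ?t - 1]))"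
    by (auto intro!: bexI[of _ "length X"])
  then have "(X @ False # True # Y, 1 / real (length ?t + 1)) \<in> set (tasep_moves a b ?t)"
    unfolding tasep_moves_def Let_def set_append by (intro UnI2)
  then show ?thesis unfolding tasep_step_def by (rule image_eqI[rotated]) simp
qed

text \<open>Particles to the right count more, so exits and hops decrease this potential.\<close>

fun potential :: "bool list \<Rightarrow> nat" where
  "potential [] = 0"
| "potential (x # w) = (if x then Suc (length w) else 0) + potential w"

lemma potential_append: "potential (X @ Y) = potential X + count_ones X * length Y + potential Y"
  by (induction X) auto

lemma tasep_step_reach_empty: "length w = n \<Longrightarrow> (tasep_step a b)\<^sup>*\<^sup>* w (replicate n False)"
proof (induction "potential w" arbitrary: w rule: less_induct)
  case less
  show ?case
  proof (cases "True \<in> set w")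
    case False
    then have "w = replicate n False" using less.prems
      by (metis (full_types) replicate_length_same)
    thus ?thesis by simp
  next
    case True
    show ?thesis
    proof (cases "last w")
      case lT: True
      define w' where "w' = butlast w"
      have w: "w = w' @ [True]" using True lT unfolding w'_def by (metis append_butlast_last_id empty_iff list.set(1))
      have "potential (w' @ [False]) < potential w" unfolding w by (simp add: potential_append)
      moreover have "length (w' @ [False]) = n" using less.prems w by simp
      ultimately have "(tasep_step a b)\<^sup>*\<^sup>* (w' @ [False]) (replicate n False)" using less.hyps by blast
      thus ?thesis unfolding w using tasep_step_exit by (rule converse_rtranclp_into_rtranclp[rotated])
    next
      case False
      obtain j where "j < length w" "w ! j" using True by (auto simp: in_set_conv_nth)
      then obtain X Y where w: "w = X @ True # False # Y" using split_True_False False by blast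
      have "potential (X @ False # True # Y) < potential w" unfolding w by (simp add: potential_append)
      moreover have "length (X @ False # True # Y) = n" using less.prems w by simp
      ultimately have "(tasep_step a b)\<^sup>*\<^sup>* (X @ False # True # Y) (replicate n False)" using less.hyps by blast
      thus ?thesis unfolding w using tasep_step_hop by (rule converse_rtranclp_into_rtranclp[rotated])
    qed
  qed
qed

lemma tasep_step_reach_hops:
  "(tasep_step a b)\<^sup>*\<^sup>* (replicate j False @ True # replicate m False @ v) (replicate (j + m) False @ True # v)"
proof (induction m arbitrary: j)
  case (Suc m)
  have "tasep_step a b (replicate j False @ True # False # (replicate m False @ v))
      (replicate j False @ False # True # (replicate m False @ v))"
    by (rule tasep_step_hop)
  moreover have "replicate j False @ False # True # (replicate m False @ v)
      = replicate (Suc j) False @ True # replicate m False @ v"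
    by (simp add: replicate_append_same[symmetric])
  ultimately show ?case using Suc.IH[of "Suc j"]
    by (auto intro: converse_rtranclp_into_rtranclp)
qed simp

lemma split_first_True: "True \<in> set u \<Longrightarrow> \<exists>i v. u = replicate i False @ True # v"
proof (induction u)
  case (Cons x u)
  show ?case
  proof (cases x)
    case False
    then obtain i v where "u = replicate i False @ True # v" using Cons by auto
    then have "x # u = replicate (Suc i) False @ True # v" using False by simp
    thus ?thesis by blast
  qed (metis append_Nil replicate_0)
qed simp

lemma tasep_step_reach_from_empty: "length u = n \<Longrightarrow> (tasep_step a b)\<^sup>*\<^sup>* (replicate n False) u"
proof (induction "count_ones u" arbitrary: u rule: less_induct)
  case less
  show ?case
  proof (cases "True \<in> set u")
    case False
    then have "u = replicate n False" using less.prems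
      by (metis (full_types) replicate_length_same)
    thus ?thesis by simp
  next
    case True
    then obtain i v where u: "u = replicate i False @ True # v" using split_first_True by blast
    define u' where "u' = replicate (Suc i) False @ v"
    have "count_ones u' < count_ones u" unfolding u u'_def by (simp add: count_ones_def)
    moreover have "length u' = n" using less.prems unfolding u u'_def by simp
    ultimately have "(tasep_step a b)\<^sup>*\<^sup>* (replicate n False) u'" using less.hyps by blast
    moreover have "tasep_step a b u' (True # replicate i False @ v)" unfolding u'_def using tasep_step_enter by simp
    moreover have "(tasep_step a b)\<^sup>*\<^sup>* (True # replicate i False @ v) u"
      using tasep_step_reach_hops[of a b 0 i v] unfolding u by simp
    ultimately show ?thesis by (meson converse_rtranclp_into_rtranclp rtranclp_trans)
  qed
qed

lemma tasep_irreducible: "length t = n \<Longrightarrow> length u = n \<Longrightarrow> (tasep_step a b)\<^sup>*\<^sup>* t u"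
  by (metis rtranclp_trans tasep_step_reach_empty tasep_step_reach_from_empty)

lemma tasep_moves_pos: "a > 0 \<Longrightarrow> b > 0 \<Longrightarrow> m \<in> set (tasep_moves a b t) \<Longrightarrow> snd m > 0"
  by (auto simp: tasep_moves_def Let_def split: if_splits)

lemma exit_rate_le:
  assumes "length t \<ge> 1" "a \<le> 1" "b \<le> 1"
  shows "exit_rate a b t \<le> real (length t + 1)"
proof -
  have "(\<Sum>i<length t - 1. if can_hop t i then 1 else 0) \<le> real (length t - 1)"
    using sum_bounded_above[of "{..<length t - 1}" "\<lambda>i. if can_hop t i then 1 else (0::real)" 1] by auto
  then show ?thesis using assms unfolding exit_rate_def by (auto simp: of_nat_diff)
qed

lemma tasep_P_ge_moves_to:
  assumes "length t = n" "n \<ge> 1" "0 < \<alpha>" "\<alpha> \<le> 1" "0 < \<beta>" "\<beta> \<le> 1"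
  shows "tasep_P \<alpha> \<beta> t s \<ge> sum_list (map snd (filter (\<lambda>m. fst m = s) (tasep_moves \<alpha> \<beta> t)))"
proof -
  have "exit_rate \<alpha> \<beta> t / real (n + 1) \<le> 1"
    using exit_rate_le[of t \<alpha> \<beta>] assms by simp
  then show ?thesis using sum_list_snd_tasep_moves[OF assms(1,2)] unfolding tasep_P_def by auto
qed

lemma tasep_P_nonneg:
  assumes "length t = n" "n \<ge> 1" "0 < \<alpha>" "\<alpha> \<le> 1" "0 < \<beta>" "\<beta> \<le> 1"
  shows "tasep_P \<alpha> \<beta> t s \<ge> 0"
proof -
  have "sum_list (map snd (filter (\<lambda>m. fst m = s) (tasep_moves \<alpha> \<beta> t))) \<ge> 0"
    by (rule sum_list_nonneg) (use tasep_moves_pos[of \<alpha> \<beta> _ t] assms in \<open>auto simp: less_imp_le\<close>)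
  then show ?thesis using tasep_P_ge_moves_to[OF assms, of s] by linarith
qed

lemma tasep_P_pos:
  assumes "length t = n" "n \<ge> 1" "0 < \<alpha>" "\<alpha> \<le> 1" "0 < \<beta>" "\<beta> \<le> 1" "tasep_step \<alpha> \<beta> t u"
  shows "tasep_P \<alpha> \<beta> t u > 0"
proof -
  obtain p where p: "(u, p) \<in> set (tasep_moves \<alpha> \<beta> t)"
    using assms(7) by (auto simp: tasep_step_def)
  let ?ps = "map snd (filter (\<lambda>m. fst m = u) (tasep_moves \<alpha> \<beta> t))"
  have "p \<in> set ?ps" using p by force
  moreover have "x \<ge> 0" if "x \<in> set ?ps" for x
    using that tasep_moves_pos[of \<alpha> \<beta> _ t] assms by (auto simp: less_imp_le)
  ultimately have "p \<le> sum_list ?ps" by (rule Groups_List.member_le_sum_list)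
  moreover have "p > 0" using tasep_moves_pos[OF assms(3,5) p] by simp
  ultimately show ?thesis using tasep_P_ge_moves_to[OF assms(1-6), of u] by linarith
qed

section \<open>The stationary distribution\<close>

lemma det_A_mat: "det (A_mat \<alpha> \<beta> t k) = hess_det (hess_col (1/\<alpha>) (1/\<beta>) (lam t)) k"
proof -
  define g where "g j d = hess_entry (1/\<alpha>) (1/\<beta>) (lam t j) (lam t (Suc j)) d" for j d
  have "A_mat \<alpha> \<beta> t k = mat k k (\<lambda>(i,j). g (j+1) (int j - int i))"
    unfolding A_mat_def by (rule eq_matI) (auto simp: A_entry_def g_def hess_entry_def tbinz_def algebra_simps)
  also have "det \<dots> = hess_det (\<lambda>j d. g j (int d)) k"
    by (rule det_hessenberg) (auto simp: g_def hess_entry_subdiag hess_entry_below_subdiag)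
  finally show ?thesis by (simp add: g_def hess_col_def[abs_def])
qed

lemma weight_eq_det_A_mat:
  assumes "length \<tau> = n" "count_ones \<tau> = k" "\<alpha> \<noteq> 0"
  shows "\<alpha> ^ n * weight (1/\<alpha>) (1/\<beta>) \<tau> = \<alpha> ^ (k + lam \<tau> 1) * det (A_mat \<alpha> \<beta> \<tau> k)"
proof -
  have "count_zeros \<tau> + k = n"
    using sum_length_filter_compl[of "\<lambda>x. x" \<tau>] assms(1,2) by (simp add: count_zeros_def count_ones_def)
  then have "\<alpha> ^ n = \<alpha> ^ (k + lam \<tau> 1) * \<alpha> ^ lead_zeros \<tau>"
    using lead_zeros_add_lam_1[of \<tau>] by (simp flip: power_add add: algebra_simps)
  moreover have "\<alpha> ^ lead_zeros \<tau> * (1/\<alpha>) ^ lead_zeros \<tau> = 1"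
    using assms(3) by (simp add: power_one_over)
  ultimately show ?thesis
    unfolding weight_def det_A_mat assms(2) by (simp add: algebra_simps)
qed

lemma Zn_eq_sum_weight:
  assumes "n \<ge> 1"
  shows "Zn n \<alpha> \<beta> = (\<alpha> * \<beta>) ^ n * (\<Sum>w\<in>tasep_states n. weight (1/\<alpha>) (1/\<beta>) w)"
  unfolding Zn_def tasep_states_def sum_weight[OF assms]
  by (intro arg_cong[where f = "\<lambda>x. (\<alpha> * \<beta>) ^ n * x"] sum.cong) (auto simp: ballot_formula_def)

lemma tasep_stationary_eq_weight:
  assumes "tasep_stationary n \<alpha> \<beta> pr" "n \<ge> 1" "0 < \<alpha>" "\<alpha> \<le> 1" "0 < \<beta>" "\<beta> \<le> 1"
    and "t \<in> tasep_states n"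
  shows "pr t = weight (1/\<alpha>) (1/\<beta>) t / (\<Sum>w\<in>tasep_states n. weight (1/\<alpha>) (1/\<beta>) w)"
proof -
  let ?S = "tasep_states n" and ?q = "weight (1/\<alpha>) (1/\<beta>)"
  have ne: "?S \<noteq> {}" using assms(7) by blast
  have qpos: "?q t > 0" for t using weight_pos assms(3,5) by simp
  have st: "(\<Sum>t\<in>?S. pr t) = 1" "\<And>s. s \<in> ?S \<Longrightarrow> (\<Sum>t\<in>?S. pr t * tasep_P \<alpha> \<beta> t s) = pr s"
    using assms(1) by (simp_all add: tasep_stationary_def)
  obtain c where c: "\<forall>t\<in>?S. pr t = c * ?q t"
  proof (rule exE[OF stationary_unique[OF finite_tasep_states ne qpos _ st(2)]])
    show "(\<Sum>t\<in>?S. ?q t * tasep_P \<alpha> \<beta> t s) = ?q s" if "s \<in> ?S" for s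
      using weight_balance assms(2,3,5) that by (simp add: tasep_states_def)
    show "tasep_P \<alpha> \<beta> t s \<ge> 0" if "t \<in> ?S" for t s
      using tasep_P_nonneg assms(2-6) that by (simp add: tasep_states_def)
    show "u \<in> ?S \<and> tasep_P \<alpha> \<beta> t u > 0" if "tasep_step \<alpha> \<beta> t u" "t \<in> ?S" for t u
      using that tasep_P_pos[OF _ assms(2-6)] tasep_step_length by (auto simp: tasep_states_def)
    show "(tasep_step \<alpha> \<beta>)\<^sup>*\<^sup>* t u" if "t \<in> ?S" "u \<in> ?S" for t u
      using that tasep_irreducible by (simp add: tasep_states_def)
  qed
  have "1 = c * (\<Sum>t\<in>?S. ?q t)" using st(1) c by (simp add: sum_distrib_left)
  then have "c = 1 / (\<Sum>t\<in>?S. ?q t)" by (auto simp: eq_divide_eq)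
  then show ?thesis using c assms(7) by simp
qed

theorem corollary1:
  fixes n k :: nat and \<alpha> \<beta> :: real and \<tau> :: "bool list" and pr :: "bool list \<Rightarrow> real"
  assumes "n \<ge> 1" and "1 \<le> k" and "k \<le> n"
    and "0 < \<alpha>" and "\<alpha> \<le> 1" and "0 < \<beta>" and "\<beta> \<le> 1"
    and "length \<tau> = n" and "length (filter (\<lambda>x. x) \<tau>) = k"
    and "tasep_stationary n \<alpha> \<beta> pr"
  shows "pr \<tau> = \<alpha> ^ (k + lam \<tau> 1) * \<beta> ^ n / Zn n \<alpha> \<beta> * det (A_mat \<alpha> \<beta> \<tau> k)"
proof -
  let ?q = "weight (1/\<alpha>) (1/\<beta>)"
  have "pr \<tau> = ?q \<tau> / (\<Sum>w\<in>tasep_states n. ?q w)"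
    using tasep_stationary_eq_weight assms by (simp add: tasep_states_def)
  also have "\<dots> = (\<alpha> * \<beta>) ^ n * ?q \<tau> / Zn n \<alpha> \<beta>"
    using Zn_eq_sum_weight[OF assms(1)] assms(4,6) by simp
  also have "(\<alpha> * \<beta>) ^ n * ?q \<tau> = \<alpha> ^ (k + lam \<tau> 1) * \<beta> ^ n * det (A_mat \<alpha> \<beta> \<tau> k)"
    using weight_eq_det_A_mat[of \<tau> n k \<alpha> \<beta>] assms(4,8,9)
    by (simp add: count_ones_def power_mult_distrib algebra_simps)
  finally show ?thesis by simp
qed
end
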